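(* Let $q=2^r$ with $r\ge 3$. Let $f\in\mathbb F_q[X,Y]$ be a local permutation polynomial whose permutation polynomial tuple consists of the $q$ elements of the group $G_2=\{b^ja^i:0\le j\le \frac q2-1,\ 0\le i\le 1\}$ (in some order), where $a$ and $b$ are as defined below. Then $f$ has a companion.
   Context: The elements of $\mathbb F_q$ are enumerated as $\mathbb F_q=\{c_0,\dots,c_{q-1}\}$; $\mathfrak S_q$ is the symmetric group of permutations of $\mathbb F_q$, composed right to left, written in cycle notation. $a=(c_0,c_1)(c_2,c_3)\cdots(c_{q-2},c_{q-1})$ and $b=(c_{\frac q2-2},c_{\frac q2-4},\dots,c_2,c_0,c_{\frac q2},c_{\frac q2+2},\dots,c_{q-4},c_{q-2})\,(c_1,c_3,\dots,c_{\frac q2-1},c_{q-1},c_{q-3},\dots,c_{\frac q2+1})$. ($G_2$ is a subgroup of $\mathfrak S_q$ of order $q$ whose non-identity elements have no fixed points.) Every function $\mathbb F_q^2\to\mathbb F_q$ is identified with the unique polynomial in $\mathbb F_q[X,Y]$ of degree $<q$ in each variable representing it. $f$ is a local permutation polynomial (LPP) if $x\mapsto f(x,y_0)$ and $y\mapsto f(x_0,y)$ are permutations of $\mathbb F_q$ for all $x_0,y_0$. A permutation polynomial tuple is $(\beta_0,\dots,\beta_{q-1})\in\mathfrak S_q^q$ such that $\beta_i^{-1}\beta_j$ has no fixed point whenever $i\ne j$; LPPs $f$ correspond bijectively to such tuples via $f(x,\beta_i(x))=c_i$ for all $x$ and all $i$. Two LPPs $f,g$ are orthogonal (companions) if for every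 $(u,v)\in\mathbb F_q^2$ the system $f(X,Y)=u$, $g(X,Y)=v$ has exactly one solution in $\mathbb F_q^2$; a companion of $f$ is an LPP orthogonal to $f$. *)

theory Defs
  imports "HOL-Combinatorics.Cycles" "HOL-Library.Cardinality"
begin

text \<open>Functions F x F -> F (identified with reduced bivariate polynomials) are
  represented as curried functions.  Permutations of F are bijections F -> F.\<close>

definition lpp :: "('a \<Rightarrow> 'a \<Rightarrow> 'a) \<Rightarrow> bool" where
  "lpp f \<longleftrightarrow> (\<forall>y. bij (\<lambda>x. f x y)) \<and> (\<forall>x. bij (\<lambda>y. f x y))"

definition orthogonal :: "('a \<Rightarrow> 'a \<Rightarrow> 'a) \<Rightarrow> ('a \<Rightarrow> 'a \<Rightarrow> 'a) \<Rightarrow> bool" where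
  "orthogonal f g \<longleftrightarrow> (\<forall>u v. \<exists>!p. f (fst p) (snd p) = u \<and> g (fst p) (snd p) = v)"

definition companion :: "('a \<Rightarrow> 'a \<Rightarrow> 'a) \<Rightarrow> ('a \<Rightarrow> 'a \<Rightarrow> 'a) \<Rightarrow> bool" where
  "companion f g \<longleftrightarrow> lpp g \<and> orthogonal f g"

definition ppt :: "nat \<Rightarrow> (nat \<Rightarrow> 'a \<Rightarrow> 'a) \<Rightarrow> bool" where
  "ppt q \<beta> \<longleftrightarrow> (\<forall>i<q. bij (\<beta> i)) \<and>
     (\<forall>i<q. \<forall>j<q. i \<noteq> j \<longrightarrow> (\<forall>x. inv (\<beta> i) (\<beta> j x) \<noteq> x))"

definition ppt_of :: "nat \<Rightarrow> (nat \<Rightarrow> 'a) \<Rightarrow> ('a \<Rightarrow> 'a \<Rightarrow> 'a) \<Rightarrow> (nat \<Rightarrow> 'a \<Rightarrow> 'a) \<Rightarrow> bool" where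
  "ppt_of q c f \<beta> \<longleftrightarrow> ppt q \<beta> \<and> (\<forall>i<q. \<forall>x. f x (\<beta> i x) = c i)"

text \<open>a = (c_0,c_1)(c_2,c_3)...(c_{q-2},c_{q-1})\<close>
definition perm_a :: "nat \<Rightarrow> (nat \<Rightarrow> 'a) \<Rightarrow> 'a \<Rightarrow> 'a" where
  "perm_a q c = foldr (\<lambda>k h. cycle_of_list [c (2*k), c (2*k+1)] \<circ> h) [0..<q div 2] id"

text \<open>b = (c_{q/2-2}, c_{q/2-4}, ..., c_2, c_0, c_{q/2}, c_{q/2+2}, ..., c_{q-2})
         (c_1, c_3, ..., c_{q/2-1}, c_{q-1}, c_{q-3}, ..., c_{q/2+1})\<close>
definition b_cycle1 :: "nat \<Rightarrow> (nat \<Rightarrow> 'a) \<Rightarrow> 'a list" where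
  "b_cycle1 q c = rev (map (\<lambda>k. c (2*k)) [0..<q div 4]) @ map (\<lambda>k. c (q div 2 + 2*k)) [0..<q div 4]"

definition b_cycle2 :: "nat \<Rightarrow> (nat \<Rightarrow> 'a) \<Rightarrow> 'a list" where
  "b_cycle2 q c = map (\<lambda>k. c (2*k+1)) [0..<q div 4] @ rev (map (\<lambda>k. c (q div 2 + 2*k + 1)) [0..<q div 4])"

definition perm_b :: "nat \<Rightarrow> (nat \<Rightarrow> 'a) \<Rightarrow> 'a \<Rightarrow> 'a" where
  "perm_b q c = cycle_of_list (b_cycle1 q c) \<circ> cycle_of_list (b_cycle2 q c)"

definition G2 :: "nat \<Rightarrow> (nat \<Rightarrow> 'a) \<Rightarrow> ('a \<Rightarrow> 'a) set" where
  "G2 q c = {(perm_b q c ^^ j) \<circ> (perm_a q c ^^ i) | j i. j < q div 2 \<and> i < 2}"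

end

theory Submission
  imports Defs
begin

text \<open>Write \<open>q = 4m\<close> and label each point of \<open>\<bbbF>\<^sub>q\<close> by its position
  \<open>(t, e) \<in> \<int>\<^sub>2\<^sub>m \<times> {0, 1}\<close> on the two cycles of \<open>b\<close>. Then \<open>b\<close> is \<open>(t, e) \<mapsto> (t + 1, e)\<close>
  and \<open>a\<close> is \<open>(t, e) \<mapsto> (m - 1 - t, 1 - e)\<close>, so \<open>G\<^sub>2\<close> consists of the rotations
  \<open>(t, e) \<mapsto> (t + j, e)\<close> and the reflections \<open>(t, e) \<mapsto> (j - t, 1 - e)\<close>.
  Since the permutations of a permutation polynomial tuple act sharply transitively, the graphs
  \<open>{(x, \<beta>\<^sub>i x)}\<close> partition \<open>\<bbbF>\<^sub>q\<^sup>2\<close>, and an LPP \<open>g\<close> is a companion of \<open>f\<close> as soon as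
  \<open>x \<mapsto> g(x, \<beta>\<^sub>i x)\<close> is injective for every \<open>i\<close>.

  For \<open>x = (t, e)\<close> put \<open>(\<gamma>, \<epsilon>) = \<Gamma>(t, e)\<close> for an explicit bijection \<open>\<Gamma>\<close> of
  \<open>\<int>\<^sub>2\<^sub>m \<times> {0, 1}\<close> and let \<open>g(x, (s, d))\<close> be \<open>(s - \<gamma>, 0)\<close> if \<open>d = \<epsilon>\<close> and \<open>(s + \<gamma>, 1)\<close>
  otherwise. Along a rotation, and likewise along a reflection, injectivity of \<open>g\<close> reduces to
  injectivity of \<open>\<gamma> - t\<close> on \<open>{e = \<epsilon>}\<close> and of \<open>\<gamma> + t\<close> on \<open>{e \<noteq> \<epsilon>}\<close>. The piecewise linear
  \<open>\<Gamma>\<close> below satisfies both; that it is a bijection uses that \<open>m\<close> is even, i.e. \<open>8\<close> divides \<open>q\<close>.\<close>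

lemma ppt_transitive:
  fixes \<beta> :: "nat \<Rightarrow> 'a::finite \<Rightarrow> 'a"
  assumes "ppt CARD('a) \<beta>"
  obtains i where "i < CARD('a)" "\<beta> i x = y"
proof -
  have "inj_on (\<lambda>i. \<beta> i x) {..<CARD('a)}"
  proof (rule inj_onI, rule ccontr)
    fix i j assume i: "i \<in> {..<CARD('a)}" and j: "j \<in> {..<CARD('a)}"
      and eq: "\<beta> i x = \<beta> j x" and "i \<noteq> j"
    then have "inv (\<beta> i) (\<beta> j x) \<noteq> x" using assms unfolding ppt_def by blast
    moreover have "inv (\<beta> i) (\<beta> i x) = x" using assms i unfolding ppt_def by (simp add: bij_is_inj)
    ultimately show False using eq by simp
  qed
  then have "(\<lambda>i. \<beta> i x) ` {..<CARD('a)} = UNIV"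
    by (simp add: card_image card_subset_eq)
  then have "y \<in> (\<lambda>i. \<beta> i x) ` {..<CARD('a)}" by simp
  then show ?thesis using that by blast
qed

lemma orthogonal_iff_bij: "orthogonal f g \<longleftrightarrow> bij (\<lambda>(x, y). (f x y, g x y))"
  unfolding orthogonal_def bij_iff split_paired_All by (simp add: case_prod_beta prod_eq_iff)

lemma companion_if_inj_on_graphs:
  fixes f g :: "'a::finite \<Rightarrow> 'a \<Rightarrow> 'a"
  assumes tuple: "ppt_of CARD('a) c f \<beta>" and c_inj: "inj_on c {..<CARD('a)}"
    and "lpp g" and graph_inj: "\<And>i. i < CARD('a) \<Longrightarrow> inj (\<lambda>x. g x (\<beta> i x))"
  shows "companion f g"
proof -
  have "ppt CARD('a) \<beta>" and f_graph: "\<And>i x. i < CARD('a) \<Longrightarrow> f x (\<beta> i x) = c i"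
    using tuple unfolding ppt_of_def by auto
  have "inj (\<lambda>(x, y). (f x y, g x y))"
  proof (rule injI, clarsimp)
    fix x y x' y' assume eq_f: "f x y = f x' y'" and eq_g: "g x y = g x' y'"
    obtain i where i: "i < CARD('a)" "\<beta> i x = y"
      using ppt_transitive[OF \<open>ppt CARD('a) \<beta>\<close>] .
    obtain i' where i': "i' < CARD('a)" "\<beta> i' x' = y'"
      using ppt_transitive[OF \<open>ppt CARD('a) \<beta>\<close>] .
    have "c i = c i'" using eq_f f_graph[OF i(1), of x] f_graph[OF i'(1), of x'] i(2) i'(2) by simp
    then have "i = i'" using i(1) i'(1) by (auto intro: inj_onD[OF c_inj])
    then have "g x (\<beta> i x) = g x' (\<beta> i x')" using eq_g i(2) i'(2) by simp
    then have "x = x'" using graph_inj[OF i(1)] unfolding inj_def by blast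
    then show "x = x' \<and> y = y'" using i(2) i'(2) \<open>i = i'\<close> by simp
  qed
  then have "orthogonal f g" by (simp add: orthogonal_iff_bij bij_def finite_UNIV_inj_surj)
  then show ?thesis using \<open>lpp g\<close> unfolding companion_def by blast
qed

lemma int_eq_if_dvd_diff:
  fixes s t N :: int
  shows "0 \<le> s \<Longrightarrow> s < N \<Longrightarrow> 0 \<le> t \<Longrightarrow> t < N \<Longrightarrow> N dvd s - t \<Longrightarrow> s = t"
  by (metis mod_eq_dvd_iff mod_pos_pos_trivial)

lemma dvd_double_cases:
  fixes N D :: int
  assumes "2 * N dvd D" "0 < N"
  shows "even D" "D = 0 \<or> 2 * N \<le> D \<or> D \<le> - (2 * N)"
proof -
  show "even D" using assms(1) by (rule dvd_mult_left)
  show "D = 0 \<or> 2 * N \<le> D \<or> D \<le> - (2 * N)"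
    using dvd_imp_le_int[OF _ assms(1)] assms(2) by (cases "D = 0") auto
qed

lemma nat_mod_Suc:
  assumes "0 < N"
  shows "nat ((t + 1) mod int N) = Suc (nat (t mod int N)) mod N"
proof -
  have "(t + 1) mod int N = (int (nat (t mod int N)) + 1) mod int N"
    using assms by (simp add: mod_add_left_eq)
  also have "\<dots> = int (Suc (nat (t mod int N)) mod N)"
    by (simp only: of_nat_mod of_nat_Suc add.commute)
  finally show ?thesis by simp
qed

lemma cycle_of_list_nth:
  assumes "distinct cs" "i < length cs"
  shows "cycle_of_list cs (cs ! i) = cs ! (Suc i mod length cs)"
proof -
  have "map (cycle_of_list cs) cs = rotate1 cs" using cyclic_rotation[OF assms(1), of 1] by simp
  then show ?thesis using assms(2) by (metis nth_map nth_rotate1)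
qed

lemma foldr_comp_init:
  "foldr (\<lambda>k h. F k \<circ> h) xs h = foldr (\<lambda>k h. F k \<circ> h) xs id \<circ> h"
  by (induction xs) (simp_all add: comp_assoc)

lemma foldr_transpositions_apply:
  assumes c_inj: "inj_on c {..<M}" and "2 * N \<le> M" and "j < M"
  shows "foldr (\<lambda>k h. cycle_of_list [c (2*k), c (2*k+1)] \<circ> h) [0..<N] id (c j) =
    c (if j < 2 * N then if even j then j + 1 else j - 1 else j)"
  using assms(2,3)
proof (induction N arbitrary: j)
  case (Suc N)
  let ?F = "\<lambda>k h. cycle_of_list [c (2*k), c (2*k+1)] \<circ> h"
  define j' where "j' = (if j = 2*N then 2*N+1 else if j = 2*N+1 then 2*N else j)"
  have "j' < M" using Suc.prems unfolding j'_def by auto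
  have "foldr ?F [0..<Suc N] id = foldr ?F [0..<N] id \<circ> transpose (c (2*N)) (c (2*N+1))"
    using foldr_comp_init[of "\<lambda>k. cycle_of_list [c (2*k), c (2*k+1)]"] by simp
  then have "foldr ?F [0..<Suc N] id (c j) = foldr ?F [0..<N] id (transpose (c (2*N)) (c (2*N+1)) (c j))"
    by simp
  also have "transpose (c (2*N)) (c (2*N+1)) (c j) = c j'"
    using inj_on_eq_iff[OF c_inj, of j] Suc.prems unfolding j'_def transpose_def by auto
  also have "foldr ?F [0..<N] id (c j') = c (if j' < 2 * N then if even j' then j' + 1 else j' - 1 else j')"
    by (rule Suc.IH) (use Suc.prems \<open>j' < M\<close> in auto)
  finally show ?case unfolding j'_def by auto
qed simp

locale dihedral_labelling =
  fixes c :: "nat \<Rightarrow> 'a::finite" and m :: nat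
  assumes card_eq: "CARD('a) = 4 * m" and m_pos: "0 < m"
    and c_bij: "bij_betw c {..<4 * m} UNIV"
begin

text \<open>Entry \<open>t\<close> of \<open>b_cycle1 (4 * m) c\<close> is \<open>c (b1_index t)\<close> and entry \<open>t\<close> of
  \<open>b_cycle2 (4 * m) c\<close> is \<open>c (b2_index t)\<close>, so \<open>pt t e\<close> is the point at position \<open>t mod 2m\<close>
  on the first (\<open>e = False\<close>) or second (\<open>e = True\<close>) cycle of \<open>b\<close>.\<close>

definition b1_index :: "nat \<Rightarrow> nat" where
  "b1_index t = (if t < m then 2 * (m - 1 - t) else 2 * m + 2 * (t - m))"

definition b2_index :: "nat \<Rightarrow> nat" where
  "b2_index t = (if t < m then 2 * t + 1 else 2 * m + 2 * (2 * m - 1 - t) + 1)"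

definition pt :: "int \<Rightarrow> bool \<Rightarrow> 'a" where
  "pt t e = c ((if e then b2_index else b1_index) (nat (t mod (2 * int m))))"

lemma c_inj: "inj_on c {..<4 * m}"
  using c_bij by (rule bij_betw_imp_inj_on)

lemma c_eq_iff: "i < 4 * m \<Longrightarrow> j < 4 * m \<Longrightarrow> c i = c j \<longleftrightarrow> i = j"
  using inj_on_eq_iff[OF c_inj] by simp

lemma b1_index_lt: "t < 2 * m \<Longrightarrow> b1_index t < 4 * m"
  and b2_index_lt: "t < 2 * m \<Longrightarrow> b2_index t < 4 * m"
  unfolding b1_index_def b2_index_def by auto

lemma b1_index_neq_b2_index: "b1_index t \<noteq> b2_index t'"
proof -
  have "even (b1_index t)" "odd (b2_index t')" unfolding b1_index_def b2_index_def by auto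
  then show ?thesis by metis
qed

lemma inj_on_b1_index: "inj_on b1_index {..<2 * m}"
  and inj_on_b2_index: "inj_on b2_index {..<2 * m}"
  unfolding inj_on_def b1_index_def b2_index_def by (auto split: if_splits)

lemma nat_mod_lt: "nat (t mod (2 * int m)) < 2 * m"
  using m_pos by (simp add: nat_less_iff)

lemma pt_eq_iff: "pt s e = pt t d \<longleftrightarrow> e = d \<and> 2 * int m dvd s - t"
proof
  assume eq: "pt s e = pt t d"
  let ?k = "nat (s mod (2 * int m))" and ?l = "nat (t mod (2 * int m))"
  have k: "?k < 2 * m" "?l < 2 * m" by (rule nat_mod_lt)+
  have idx: "(if e then b2_index else b1_index) ?k = (if d then b2_index else b1_index) ?l"
    using eq unfolding pt_def by (rule inj_onD[OF c_inj]) (use k b1_index_lt b2_index_lt in auto)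
  then have "e = d" using b1_index_neq_b2_index by (auto split: if_splits dest: sym)
  moreover have "?k = ?l"
  proof (cases e)
    case True
    show ?thesis by (rule inj_onD[OF inj_on_b2_index]) (use idx True \<open>e = d\<close> k in auto)
  next
    case False
    show ?thesis by (rule inj_onD[OF inj_on_b1_index]) (use idx False \<open>e = d\<close> k in auto)
  qed
  then have "s mod (2 * int m) = t mod (2 * int m)"
    using m_pos by (simp add: nat_eq_iff2)
  ultimately show "e = d \<and> 2 * int m dvd s - t" by (simp add: mod_eq_dvd_iff)
next
  assume "e = d \<and> 2 * int m dvd s - t"
  then show "pt s e = pt t d" unfolding pt_def by (simp add: mod_eq_dvd_iff[symmetric])
qed

lemma pt_surj:
  obtains t e where "0 \<le> t" "t < 2 * int m" "pt t e = x"
proof -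
  let ?S = "{0..<2 * int m} \<times> (UNIV :: bool set)"
  have "inj_on (\<lambda>(t, e). pt t e) ?S"
  proof (rule inj_onI, clarsimp)
    fix t e t' e' assume "0 \<le> t" "t < 2 * int m" "0 \<le> t'" "t' < 2 * int m" "pt t e = pt t' e'"
    then show "t = t' \<and> e = e'" by (auto simp: pt_eq_iff intro: int_eq_if_dvd_diff)
  qed
  then have "card ((\<lambda>(t, e). pt t e) ` ?S) = CARD('a)"
    using card_eq by (simp add: card_image card_cartesian_product)
  then have "(\<lambda>(t, e). pt t e) ` ?S = UNIV" by (simp add: card_subset_eq)
  then obtain t e where "(t, e) \<in> ?S" "x = pt t e" by (metis (no_types, lifting) UNIV_I case_prod_conv imageE surj_pair)
  then show ?thesis by (intro that[of t e]) auto
qed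

definition coord :: "'a \<Rightarrow> int \<times> bool" where
  "coord x = (SOME p. 0 \<le> fst p \<and> fst p < 2 * int m \<and> pt (fst p) (snd p) = x)"

abbreviation idx :: "'a \<Rightarrow> int" where "idx x \<equiv> fst (coord x)"
abbreviation side :: "'a \<Rightarrow> bool" where "side x \<equiv> snd (coord x)"

lemma coord: "0 \<le> idx x" "idx x < 2 * int m" "pt (idx x) (side x) = x"
proof -
  obtain t e where "0 \<le> t" "t < 2 * int m" "pt t e = x" by (rule pt_surj)
  then have "\<exists>p. 0 \<le> fst p \<and> fst p < 2 * int m \<and> pt (fst p) (snd p) = x" by auto
  from someI_ex[OF this] show "0 \<le> idx x" "idx x < 2 * int m" "pt (idx x) (side x) = x"
    unfolding coord_def by simp_all
qed

lemma coord_eqI: "idx x = idx y \<Longrightarrow> side x = side y \<Longrightarrow> x = y"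
proof -
  assume "idx x = idx y" "side x = side y"
  then have "pt (idx x) (side x) = pt (idx y) (side y)" by simp
  then show "x = y" by (simp only: coord(3))
qed

lemma side_pt: "side (pt t e) = e"
  and idx_pt: "2 * int m dvd idx (pt t e) - t"
  using coord(3)[of "pt t e"] by (simp_all add: pt_eq_iff)

lemma b_cycle1_eq: "b_cycle1 (4 * m) c = map (c \<circ> b1_index) [0..<2 * m]"
  by (rule nth_equalityI) (auto simp: b_cycle1_def nth_append rev_nth b1_index_def)

lemma b_cycle2_eq: "b_cycle2 (4 * m) c = map (c \<circ> b2_index) [0..<2 * m]"
  by (rule nth_equalityI) (auto simp: b_cycle2_def nth_append rev_nth b2_index_def mult_2)

lemma distinct_b_cycle:
  "distinct (map (c \<circ> b1_index) [0..<2 * m])" "distinct (map (c \<circ> b2_index) [0..<2 * m])"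
proof -
  have "inj_on (c \<circ> b1_index) {..<2 * m}" "inj_on (c \<circ> b2_index) {..<2 * m}"
    using inj_on_b1_index inj_on_b2_index b1_index_lt b2_index_lt
    by (auto simp: inj_on_def c_eq_iff)
  then show "distinct (map (c \<circ> b1_index) [0..<2 * m])" "distinct (map (c \<circ> b2_index) [0..<2 * m])"
    by (simp_all add: distinct_map atLeast0LessThan)
qed

lemma perm_b_pt: "perm_b (4 * m) c (pt t e) = pt (t + 1) e"
proof -
  define k where "k = nat (t mod (2 * int m))"
  have k: "k < 2 * m" unfolding k_def by (rule nat_mod_lt)
  have succ: "nat ((t + 1) mod (2 * int m)) = Suc k mod (2 * m)"
    unfolding k_def using nat_mod_Suc[of "2 * m" t] m_pos by simp
  have "Suc k mod (2 * m) < 2 * m" using m_pos by simp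
  let ?L1 = "map (c \<circ> b1_index) [0..<2 * m]" and ?L2 = "map (c \<circ> b2_index) [0..<2 * m]"
  have disjoint: "c (b1_index s) \<notin> set ?L2" "c (b2_index s) \<notin> set ?L1" if "s < 2 * m" for s
    using that b1_index_lt b2_index_lt b1_index_neq_b2_index by (auto simp: c_eq_iff dest: sym)
  show ?thesis
  proof (cases e)
    case True
    have "cycle_of_list ?L2 (?L2 ! k) = c (b2_index (Suc k mod (2 * m)))"
      using cycle_of_list_nth[OF distinct_b_cycle(2), of k] k by simp
    then show ?thesis using True k disjoint(2)[OF \<open>Suc k mod (2 * m) < 2 * m\<close>]
      unfolding perm_b_def b_cycle1_eq b_cycle2_eq
      by (simp add: id_outside_supp pt_def succ k_def[symmetric])
  next
    case False
    have "cycle_of_list ?L1 (?L1 ! k) = c (b1_index (Suc k mod (2 * m)))"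
      using cycle_of_list_nth[OF distinct_b_cycle(1), of k] k by simp
    then show ?thesis using False k disjoint(1)[OF k]
      unfolding perm_b_def b_cycle1_eq b_cycle2_eq
      by (simp add: id_outside_supp pt_def succ k_def[symmetric])
  qed
qed

lemma perm_b_funpow_pt: "(perm_b (4 * m) c ^^ n) (pt t e) = pt (t + int n) e"
  by (induction n) (simp_all add: perm_b_pt add_ac)

lemma perm_a_c: "j < 4 * m \<Longrightarrow> perm_a (4 * m) c (c j) = c (if even j then j + 1 else j - 1)"
  unfolding perm_a_def using foldr_transpositions_apply[OF c_inj, of "2 * m" j] by simp

lemma perm_a_pt: "perm_a (4 * m) c (pt t e) = pt (int m - 1 - t) (\<not> e)"
proof -
  define k where "k = nat (t mod (2 * int m))"
  have k: "k < 2 * m" unfolding k_def by (rule nat_mod_lt)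
  define k' where "k' = (if k < m then m - 1 - k else 3 * m - 1 - k)"
  have "(int m - 1 - t) mod (2 * int m) = int k'"
  proof -
    have "2 * int m dvd t - int k"
      unfolding k_def using m_pos by (simp add: mod_eq_dvd_iff[symmetric])
    then have "2 * int m dvd (if k < m then 0 else - (2 * int m)) - (t - int k)"
      by (simp add: dvd_diff)
    moreover have "(int m - 1 - t) - int k' = (if k < m then 0 else - (2 * int m)) - (t - int k)"
      unfolding k'_def using k by auto
    ultimately have "2 * int m dvd (int m - 1 - t) - int k'" by (simp only:)
    then show ?thesis unfolding k'_def using k by (auto simp: mod_eq_dvd_iff[symmetric] of_nat_diff)
  qed
  then have k': "nat ((int m - 1 - t) mod (2 * int m)) = k'" by simp
  show ?thesis
  proof (cases e)
    case True
    have "b2_index k - 1 = b1_index k'" unfolding b1_index_def b2_index_def k'_def using k by auto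
    then show ?thesis
      using True perm_a_c[OF b2_index_lt[OF k]] unfolding pt_def k_def[symmetric] k' b2_index_def
      by auto
  next
    case False
    have "b1_index k + 1 = b2_index k'" unfolding b1_index_def b2_index_def k'_def using k m_pos by auto
    then show ?thesis
      using False perm_a_c[OF b1_index_lt[OF k]] unfolding pt_def k_def[symmetric] k' b1_index_def
      by auto
  qed
qed

lemma G2_cases:
  assumes "h \<in> G2 (4 * m) c"
  obtains (rotation) j where "\<And>t e. h (pt t e) = pt (t + j) e"
    | (reflection) j where "\<And>t e. h (pt t e) = pt (j - t) (\<not> e)"
proof -
  obtain n i where h: "h = (perm_b (4 * m) c ^^ n) \<circ> (perm_a (4 * m) c ^^ i)" and "i < 2"
    using assms unfolding G2_def by blast
  then consider "i = 0" | "i = 1" by linarith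
  then show ?thesis
  proof cases
    case 1
    then show ?thesis using h perm_b_funpow_pt by (intro rotation[of "int n"]) simp
  next
    case 2
    then show ?thesis using h perm_b_funpow_pt perm_a_pt
      by (intro reflection[of "int m - 1 + int n"]) (simp add: algebra_simps)
  qed
qed

end

locale even_dihedral_labelling = dihedral_labelling +
  assumes even_m: "even m"
begin

text \<open>\<open>gam\<close> is the map \<open>\<Gamma>\<close> described at the top; \<open>shift x\<close> and \<open>flag x\<close> below are
  \<open>\<gamma>\<close> and \<open>\<epsilon>\<close> at \<open>x = pt (idx x) (side x)\<close>.\<close>

definition gam :: "int \<Rightarrow> bool \<Rightarrow> int \<times> bool" where
  "gam t e = (if t < int m then if e then (2 * t + int m, True) else (2 * t, False)
    else if e then (int m - 1 - 2 * (t - int m), False) else (- 1 - 2 * (t - int m), True))"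

lemma gam_inj:
  assumes "0 \<le> t" "t < 2 * int m" "0 \<le> t'" "t' < 2 * int m"
    and "snd (gam t e) = snd (gam t' e')" "2 * int m dvd fst (gam t e) - fst (gam t' e')"
  shows "t = t' \<and> e = e'"
  using assms(1-5) dvd_double_cases[OF assms(6)] m_pos even_m unfolding gam_def
  by (auto split: if_splits)

lemma gam_minus_inj:
  assumes "0 \<le> t" "t < 2 * int m" "0 \<le> t'" "t' < 2 * int m"
    and "e = snd (gam t e)" "e' = snd (gam t' e')"
    and "2 * int m dvd (fst (gam t e) - t) - (fst (gam t' e') - t')"
  shows "t = t' \<and> e = e'"
  using assms(1-6) dvd_double_cases[OF assms(7)] m_pos even_m unfolding gam_def
  by (auto split: if_splits)

lemma gam_plus_inj:
  assumes "0 \<le> t" "t < 2 * int m" "0 \<le> t'" "t' < 2 * int m"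
    and "e \<noteq> snd (gam t e)" "e' \<noteq> snd (gam t' e')"
    and "2 * int m dvd (fst (gam t e) + t) - (fst (gam t' e') + t')"
  shows "t = t' \<and> e = e'"
  using assms(1-6) dvd_double_cases[OF assms(7)] m_pos even_m unfolding gam_def
  by (auto split: if_splits)

definition shift :: "'a \<Rightarrow> int" where "shift x = fst (gam (idx x) (side x))"
definition flag :: "'a \<Rightarrow> bool" where "flag x = snd (gam (idx x) (side x))"

lemma shift_inj: "flag x = flag x' \<Longrightarrow> 2 * int m dvd shift x - shift x' \<Longrightarrow> x = x'"
  using gam_inj[OF coord(1,2) coord(1,2)] unfolding shift_def flag_def by (blast intro: coord_eqI)

lemma shift_minus_idx_inj:
  "side x = flag x \<Longrightarrow> side x' = flag x' \<Longrightarrow>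
    2 * int m dvd (shift x - idx x) - (shift x' - idx x') \<Longrightarrow> x = x'"
  using gam_minus_inj[OF coord(1,2) coord(1,2)] unfolding shift_def flag_def by (blast intro: coord_eqI)

lemma shift_plus_idx_inj:
  "side x \<noteq> flag x \<Longrightarrow> side x' \<noteq> flag x' \<Longrightarrow>
    2 * int m dvd (shift x + idx x) - (shift x' + idx x') \<Longrightarrow> x = x'"
  using gam_plus_inj[OF coord(1,2) coord(1,2)] unfolding shift_def flag_def by (blast intro: coord_eqI)

definition partner :: "'a \<Rightarrow> 'a \<Rightarrow> 'a" where
  "partner x y = (if side y = flag x then pt (idx y - shift x) False else pt (idx y + shift x) True)"

lemma partner_pt:
  "partner x (pt s d) = (if d = flag x then pt (s - shift x) False else pt (s + shift x) True)"
proof -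
  have "2 * int m dvd (idx (pt s d) + u) - (s + u)" for u using idx_pt[of s d] by simp
  then show ?thesis unfolding partner_def side_pt by (auto simp: pt_eq_iff)
qed

lemma inj_pt_branches:
  assumes F: "\<And>x. F x = (if P x then pt (j - u x) False else pt (j + v x) True)"
    and u: "\<And>x x'. P x \<Longrightarrow> P x' \<Longrightarrow> 2 * int m dvd u x - u x' \<Longrightarrow> x = x'"
    and v: "\<And>x x'. \<not> P x \<Longrightarrow> \<not> P x' \<Longrightarrow> 2 * int m dvd v x - v x' \<Longrightarrow> x = x'"
  shows "inj F"
proof (rule injI)
  fix x x' assume eq: "F x = F x'"
  have "(j - u x) - (j - u x') = - (u x - u x')" "(j + v x) - (j + v x') = v x - v x'" by simp_all
  then show "x = x'" using eq u v unfolding F by (auto simp: pt_eq_iff split: if_splits)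
qed

lemma lpp_partner: "lpp partner"
  unfolding lpp_def
proof (intro conjI allI)
  fix y
  have "inj (\<lambda>x. partner x y)"
  proof (rule inj_pt_branches)
    show "partner x y = (if side y = flag x then pt (idx y - shift x) False else pt (idx y + shift x) True)"
      for x by (rule partner_def)
  qed (use shift_inj in auto)
  then show "bij (\<lambda>x. partner x y)" by (simp add: bij_def finite_UNIV_inj_surj)
next
  fix x
  have "inj (partner x)"
  proof (rule injI)
    fix y y' assume "partner x y = partner x y'"
    then have "side y = side y'" "2 * int m dvd idx y - idx y'"
      unfolding partner_def by (auto simp: pt_eq_iff split: if_splits)
    then show "y = y'" using coord(1,2) by (blast intro: coord_eqI int_eq_if_dvd_diff)
  qed
  then show "bij (\<lambda>y. partner x y)" by (simp add: bij_def finite_UNIV_inj_surj)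
qed

lemma inj_partner_graph:
  assumes "h \<in> G2 (4 * m) c"
  shows "inj (\<lambda>x. partner x (h x))"
  using assms
proof (cases rule: G2_cases)
  case (rotation j)
  have "partner x (h x) = (if side x = flag x then pt (j - (shift x - idx x)) False
      else pt (j + (shift x + idx x)) True)" for x
    using rotation[of "idx x" "side x"] partner_pt[of x] by (simp add: coord(3) algebra_simps)
  then show ?thesis by (rule inj_pt_branches) (use shift_minus_idx_inj shift_plus_idx_inj in auto)
next
  case (reflection j)
  have "partner x (h x) = (if side x \<noteq> flag x then pt (j - (shift x + idx x)) False
      else pt (j + (shift x - idx x)) True)" for x
    using reflection[of "idx x" "side x"] partner_pt[of x] by (auto simp: coord(3) algebra_simps)
  then show ?thesis by (rule inj_pt_branches) (use shift_minus_idx_inj shift_plus_idx_inj in auto)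
qed

end

theorem theorem4p9:
  fixes c :: "nat \<Rightarrow> 'a::{finite,field}"
    and f :: "'a \<Rightarrow> 'a \<Rightarrow> 'a"
    and \<beta> :: "nat \<Rightarrow> 'a \<Rightarrow> 'a"
    and r :: nat
  assumes "CARD('a) = 2 ^ r" and "r \<ge> 3"
    and "bij_betw c {..<CARD('a)} UNIV"
    and "lpp f"
    and "ppt_of CARD('a) c f \<beta>"
    and "bij_betw \<beta> {..<CARD('a)} (G2 CARD('a) c)"
  shows "\<exists>g. companion f g"
proof -
  define m :: nat where "m = 2 ^ (r - 2)"
  have "r = 2 + (r - 2)" using \<open>r \<ge> 3\<close> by simp
  then have "2 ^ r = (2 ^ 2 * 2 ^ (r - 2) :: nat)" by (metis power_add)
  then have card: "CARD('a) = 4 * m" using assms(1) unfolding m_def by simp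
  have "even m" "0 < m" using \<open>r \<ge> 3\<close> unfolding m_def by simp_all
  then interpret even_dihedral_labelling c m
    using card assms(3) by unfold_locales simp_all
  have "companion f partner"
  proof (rule companion_if_inj_on_graphs)
    show "inj_on c {..<CARD('a)}" using assms(3) by (rule bij_betw_imp_inj_on)
    show "inj (\<lambda>x. partner x (\<beta> i x))" if "i < CARD('a)" for i
      using inj_partner_graph bij_betw_apply[OF assms(6)] that card by simp
  qed (use assms(5) lpp_partner in simp_all)
  then show ?thesis by blast
qed

end
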